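(* For every command $c$ and stores $\sigma,\sigma'$ of the While-language: $(c,\sigma)\Rightarrow^\infty$ if and only if $(c,\sigma,\Downarrow)\Rightarrow^{co}_G\sigma',\Uparrow$.
   Context: While-language syntax: variables $x$ range over a countably infinite set $\mathit{Var}$; $n$ ranges over natural numbers; values are $v ::= \mathsf{null}\mid n$ ($\mathsf{null}$ distinct from every natural number); expressions are $e ::= v\mid x\mid e_1\oplus e_2$ with $\oplus\in\{+,-,*\}$, where $\oplus(n_1,n_2)$ is the result of the operation on naturals; commands are $c ::= \mathsf{skip}\mid\mathsf{alloc}\ x\mid x:=e\mid c_1;c_2\mid \mathsf{if}\ e\ c_1\ c_2\mid\mathsf{while}\ e\ c$. A store $\sigma$ is a finite partial map from $\mathit{Var}$ to values, with domain $\mathrm{dom}(\sigma)$, lookup $\sigma(x)$, update $\sigma[x\mapsto v]$. Expression evaluation $(e,\sigma)\Rightarrow_E v$ is the least relation with: $(v,\sigma)\Rightarrow_E v$; $(x,\sigma)\Rightarrow_E\sigma(x)$ if $x\in\mathrm{dom}(\sigma)$; if $(e_1,\sigma)\Rightarrow_E n_1$ and $(e_2,\sigma)\Rightarrow_E n_2$ with $n_1,n_2$ naturals then $(e_1\oplus e_2,\sigma)\Rightarrow_E\oplus(n_1,n_2)$. Big-step relation $(c,\sigma)\Rightarrow_B\sigma'$ is the least relation with: $(\mathsf{skip},\sigma)\Rightarrow_B\sigma$; $(\mathsf{alloc}\ x,\sigma)\Rightarrow_B\sigma[x\mapsto\mathsf{null}]$ if $x\notin\mathrm{dom}(\sigma)$;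 $(x:=e,\sigma)\Rightarrow_B\sigma[x\mapsto v]$ if $x\in\mathrm{dom}(\sigma)$ and $(e,\sigma)\Rightarrow_E v$; $(c_1;c_2,\sigma)\Rightarrow_B\sigma''$ if $(c_1,\sigma)\Rightarrow_B\sigma'$ and $(c_2,\sigma')\Rightarrow_B\sigma''$; $(\mathsf{if}\ e\ c_1\ c_2,\sigma)\Rightarrow_B\sigma'$ if $(e,\sigma)\Rightarrow_E v$, $v\ne0$, $(c_1,\sigma)\Rightarrow_B\sigma'$; $(\mathsf{if}\ e\ c_1\ c_2,\sigma)\Rightarrow_B\sigma'$ if $(e,\sigma)\Rightarrow_E0$, $(c_2,\sigma)\Rightarrow_B\sigma'$; $(\mathsf{while}\ e\ c,\sigma)\Rightarrow_B\sigma''$ if $(e,\sigma)\Rightarrow_E v$, $v\ne0$, $(c,\sigma)\Rightarrow_B\sigma'$, $(\mathsf{while}\ e\ c,\sigma')\Rightarrow_B\sigma''$; $(\mathsf{while}\ e\ c,\sigma)\Rightarrow_B\sigma$ if $(e,\sigma)\Rightarrow_E0$. The big-step divergence predicate $(c,\sigma)\Rightarrow^\infty$ is the greatest predicate such that every element is the conclusion of an instance of one of these rules whose $\Rightarrow^\infty$-premises are in it: $(c_1,\sigma)\Rightarrow^\infty$ gives $(c_1;c_2,\sigma)\Rightarrow^\infty$; $(c_1,\sigma)\Rightarrow_B\sigma'$ and $(c_2,\sigma')\Rightarrow^\infty$ give $(c_1;c_2,\sigma)\Rightarrow^\infty$; $(e,\sigma)\Rightarrow_E v$, $v\ne0$,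 $(c_1,\sigma)\Rightarrow^\infty$ give $(\mathsf{if}\ e\ c_1\ c_2,\sigma)\Rightarrow^\infty$; $(e,\sigma)\Rightarrow_E0$, $(c_2,\sigma)\Rightarrow^\infty$ give $(\mathsf{if}\ e\ c_1\ c_2,\sigma)\Rightarrow^\infty$; $(e,\sigma)\Rightarrow_E v$, $v\ne0$, $(c,\sigma)\Rightarrow^\infty$ give $(\mathsf{while}\ e\ c,\sigma)\Rightarrow^\infty$; $(e,\sigma)\Rightarrow_E v$, $v\ne0$, $(c,\sigma)\Rightarrow_B\sigma'$, $(\mathsf{while}\ e\ c,\sigma')\Rightarrow^\infty$ give $(\mathsf{while}\ e\ c,\sigma)\Rightarrow^\infty$. Flag-based big-step semantics: status flags $\delta ::= \Downarrow\mid\Uparrow$ (convergent / divergent). Expression evaluation $(e,\sigma,\delta)\Rightarrow_{GE}v,\delta'$ is the least relation with: $(v,\sigma,\Downarrow)\Rightarrow_{GE}v,\Downarrow$; $(x,\sigma,\Downarrow)\Rightarrow_{GE}\sigma(x),\Downarrow$ if $x\in\mathrm{dom}(\sigma)$; if $(e_1,\sigma,\Downarrow)\Rightarrow_{GE}n_1,\delta$ and $(e_2,\sigma,\delta)\Rightarrow_{GE}n_2,\delta'$ ($n_1,n_2$ naturals) then $(e_1\oplus e_2,\sigma,\Downarrow)\Rightarrow_{GE}\oplus(n_1,n_2),\delta'$; and $(e,\sigma,\Uparrow)\Rightarrow_{GE}v,\Uparrow$ for every value $v$. The command rules for judgments $(c,\sigma,\delta)\Rightarrow_G\sigma',\delta'$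 are: $(\mathsf{skip},\sigma,\Downarrow)\Rightarrow_G\sigma,\Downarrow$; $(\mathsf{alloc}\ x,\sigma,\Downarrow)\Rightarrow_G\sigma[x\mapsto\mathsf{null}],\Downarrow$ if $x\notin\mathrm{dom}(\sigma)$; $(x:=e,\sigma,\Downarrow)\Rightarrow_G\sigma[x\mapsto v],\delta$ if $x\in\mathrm{dom}(\sigma)$ and $(e,\sigma,\Downarrow)\Rightarrow_{GE}v,\delta$; $(c_1;c_2,\sigma,\Downarrow)\Rightarrow_G\sigma'',\delta'$ if $(c_1,\sigma,\Downarrow)\Rightarrow_G\sigma',\delta$ and $(c_2,\sigma',\delta)\Rightarrow_G\sigma'',\delta'$; $(\mathsf{if}\ e\ c_1\ c_2,\sigma,\Downarrow)\Rightarrow_G\sigma',\delta'$ if $v\ne0$, $(e,\sigma,\Downarrow)\Rightarrow_{GE}v,\delta$ and $(c_1,\sigma,\delta)\Rightarrow_G\sigma',\delta'$; $(\mathsf{if}\ e\ c_1\ c_2,\sigma,\Downarrow)\Rightarrow_G\sigma',\delta'$ if $(e,\sigma,\Downarrow)\Rightarrow_{GE}0,\delta$ and $(c_2,\sigma,\delta)\Rightarrow_G\sigma',\delta'$; $(\mathsf{while}\ e\ c,\sigma,\Downarrow)\Rightarrow_G\sigma'',\delta''$ if $(e,\sigma,\Downarrow)\Rightarrow_{GE}v,\delta$, $v\ne0$, $(c,\sigma,\delta)\Rightarrow_G\sigma',\delta'$ and $(\mathsf{while}\ e\ c,\sigma',\delta')\Rightarrow_G\sigma'',\delta''$; $(\mathsf{while}\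 e\ c,\sigma,\Downarrow)\Rightarrow_G\sigma,\delta$ if $(e,\sigma,\Downarrow)\Rightarrow_{GE}0,\delta$; $(c,\sigma,\Uparrow)\Rightarrow_G\sigma',\Uparrow$ for every store $\sigma'$. $\Rightarrow^{co}_G$ denotes the coinductive interpretation of these command rules: the greatest relation such that every element is the conclusion of a rule instance whose command premises lie in it (the $\Rightarrow_{GE}$ premises refer to the expression relation above). *)

theory Defs
  imports Main "HOL-Library.Finite_Map"
begin

type_synonym var = nat

datatype val = Null | N nat

datatype binop = Plus | Minus | Times

datatype exp = Val val | Var var | Bin binop exp exp

datatype com = Skip | Alloc var | Assign var exp | Seq com com
  | If exp com com | While exp com

type_synonym store = "(var, val) fmap"

fun apply_op :: "binop \<Rightarrow> nat \<Rightarrow> nat \<Rightarrow> nat" where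
  "apply_op Plus a b = a + b"
| "apply_op Minus a b = a - b"
| "apply_op Times a b = a * b"

inductive eval :: "exp \<Rightarrow> store \<Rightarrow> val \<Rightarrow> bool" where
  EVal: "eval (Val v) \<sigma> v"
| EVar: "fmlookup \<sigma> x = Some v \<Longrightarrow> eval (Var x) \<sigma> v"
| EBin: "eval e1 \<sigma> (N n1) \<Longrightarrow> eval e2 \<sigma> (N n2) \<Longrightarrow>
         eval (Bin op e1 e2) \<sigma> (N (apply_op op n1 n2))"

inductive bigstep :: "com \<Rightarrow> store \<Rightarrow> store \<Rightarrow> bool" where
  BSkip: "bigstep Skip \<sigma> \<sigma>"
| BAlloc: "x |\<notin>| fmdom \<sigma> \<Longrightarrow> bigstep (Alloc x) \<sigma> (fmupd x Null \<sigma>)"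
| BAssign: "x |\<in>| fmdom \<sigma> \<Longrightarrow> eval e \<sigma> v \<Longrightarrow> bigstep (Assign x e) \<sigma> (fmupd x v \<sigma>)"
| BSeq: "bigstep c1 \<sigma> \<sigma>' \<Longrightarrow> bigstep c2 \<sigma>' \<sigma>'' \<Longrightarrow> bigstep (Seq c1 c2) \<sigma> \<sigma>''"
| BIfT: "eval e \<sigma> v \<Longrightarrow> v \<noteq> N 0 \<Longrightarrow> bigstep c1 \<sigma> \<sigma>' \<Longrightarrow> bigstep (If e c1 c2) \<sigma> \<sigma>'"
| BIfF: "eval e \<sigma> (N 0) \<Longrightarrow> bigstep c2 \<sigma> \<sigma>' \<Longrightarrow> bigstep (If e c1 c2) \<sigma> \<sigma>'"
| BWhileT: "eval e \<sigma> v \<Longrightarrow> v \<noteq> N 0 \<Longrightarrow> bigstep c \<sigma> \<sigma>' \<Longrightarrow>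
            bigstep (While e c) \<sigma>' \<sigma>'' \<Longrightarrow> bigstep (While e c) \<sigma> \<sigma>''"
| BWhileF: "eval e \<sigma> (N 0) \<Longrightarrow> bigstep (While e c) \<sigma> \<sigma>"

coinductive diverges :: "com \<Rightarrow> store \<Rightarrow> bool" where
  DSeq1: "diverges c1 \<sigma> \<Longrightarrow> diverges (Seq c1 c2) \<sigma>"
| DSeq2: "bigstep c1 \<sigma> \<sigma>' \<Longrightarrow> diverges c2 \<sigma>' \<Longrightarrow> diverges (Seq c1 c2) \<sigma>"
| DIfT: "eval e \<sigma> v \<Longrightarrow> v \<noteq> N 0 \<Longrightarrow> diverges c1 \<sigma> \<Longrightarrow> diverges (If e c1 c2) \<sigma>"
| DIfF: "eval e \<sigma> (N 0) \<Longrightarrow> diverges c2 \<sigma> \<Longrightarrow> diverges (If e c1 c2) \<sigma>"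
| DWhile1: "eval e \<sigma> v \<Longrightarrow> v \<noteq> N 0 \<Longrightarrow> diverges c \<sigma> \<Longrightarrow> diverges (While e c) \<sigma>"
| DWhile2: "eval e \<sigma> v \<Longrightarrow> v \<noteq> N 0 \<Longrightarrow> bigstep c \<sigma> \<sigma>' \<Longrightarrow>
            diverges (While e c) \<sigma>' \<Longrightarrow> diverges (While e c) \<sigma>"

datatype flag = Conv | Div

inductive geval :: "exp \<Rightarrow> store \<Rightarrow> flag \<Rightarrow> val \<Rightarrow> flag \<Rightarrow> bool" where
  GVal: "geval (Val v) \<sigma> Conv v Conv"
| GVar: "fmlookup \<sigma> x = Some v \<Longrightarrow> geval (Var x) \<sigma> Conv v Conv"
| GBin: "geval e1 \<sigma> Conv (N n1) \<delta> \<Longrightarrow> geval e2 \<sigma> \<delta> (N n2) \<delta>' \<Longrightarrow>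
         geval (Bin op e1 e2) \<sigma> Conv (N (apply_op op n1 n2)) \<delta>'"
| GDiv: "geval e \<sigma> Div v Div"

coinductive gco :: "com \<Rightarrow> store \<Rightarrow> flag \<Rightarrow> store \<Rightarrow> flag \<Rightarrow> bool" where
  GSkip: "gco Skip \<sigma> Conv \<sigma> Conv"
| GAlloc: "x |\<notin>| fmdom \<sigma> \<Longrightarrow> gco (Alloc x) \<sigma> Conv (fmupd x Null \<sigma>) Conv"
| GAssign: "x |\<in>| fmdom \<sigma> \<Longrightarrow> geval e \<sigma> Conv v \<delta> \<Longrightarrow> gco (Assign x e) \<sigma> Conv (fmupd x v \<sigma>) \<delta>"
| GSeq: "gco c1 \<sigma> Conv \<sigma>' \<delta> \<Longrightarrow> gco c2 \<sigma>' \<delta> \<sigma>'' \<delta>' \<Longrightarrow> gco (Seq c1 c2) \<sigma> Conv \<sigma>'' \<delta>'"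
| GIfT: "v \<noteq> N 0 \<Longrightarrow> geval e \<sigma> Conv v \<delta> \<Longrightarrow> gco c1 \<sigma> \<delta> \<sigma>' \<delta>' \<Longrightarrow> gco (If e c1 c2) \<sigma> Conv \<sigma>' \<delta>'"
| GIfF: "geval e \<sigma> Conv (N 0) \<delta> \<Longrightarrow> gco c2 \<sigma> \<delta> \<sigma>' \<delta>' \<Longrightarrow> gco (If e c1 c2) \<sigma> Conv \<sigma>' \<delta>'"
| GWhileT: "geval e \<sigma> Conv v \<delta> \<Longrightarrow> v \<noteq> N 0 \<Longrightarrow> gco c \<sigma> \<delta> \<sigma>' \<delta>' \<Longrightarrow>
            gco (While e c) \<sigma>' \<delta>' \<sigma>'' \<delta>'' \<Longrightarrow> gco (While e c) \<sigma> Conv \<sigma>'' \<delta>''"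
| GWhileF: "geval e \<sigma> Conv (N 0) \<delta> \<Longrightarrow> gco (While e c) \<sigma> Conv \<sigma> \<delta>"
| GDivC: "gco c \<sigma> Div \<sigma>' Div"

end

theory Submission
  imports Defs
begin

text \<open>
  A terminating big-step run determines the flagged coinductive judgement from \<open>Conv\<close>
  uniquely (induction on the run): it must end in the same store with flag \<open>Conv\<close>.
  Hence a derivation ending in \<open>Div\<close> admits no terminating run, and in its last rule
  the first premise without a terminating run is the one along which divergence
  continues; this drives the coinduction for \<open>diverges\<close>. Conversely, every
  divergence rule is matched by the flagged rule with the same shape, the terminating
  premises being supplied by big-step runs and everything after the switch to \<open>Div\<close>
  being discharged by \<open>GDivC\<close>.
\<close>

lemma eval_deterministic: "eval e \<sigma> v \<Longrightarrow> eval e \<sigma> v' \<Longrightarrow> v' = v"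
proof (induction arbitrary: v' rule: eval.induct)
  case (EBin e1 \<sigma> n1 e2 n2 op)
  from EBin.prems show ?case
    by (cases rule: eval.cases) (auto dest!: EBin.IH)
qed (auto elim: eval.cases)

lemma geval_Conv_iff: "geval e \<sigma> Conv v \<delta> \<longleftrightarrow> eval e \<sigma> v \<and> \<delta> = Conv"
proof
  have "geval e \<sigma> \<delta>\<^sub>0 v \<delta> \<Longrightarrow> \<delta>\<^sub>0 = Conv \<Longrightarrow> eval e \<sigma> v \<and> \<delta> = Conv" for \<delta>\<^sub>0
    by (induction rule: geval.induct) (auto intro: eval.intros)
  then show "geval e \<sigma> Conv v \<delta> \<Longrightarrow> eval e \<sigma> v \<and> \<delta> = Conv" by blast
  have "eval e \<sigma> v \<Longrightarrow> geval e \<sigma> Conv v Conv"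
    by (induction rule: eval.induct) (auto intro: geval.intros)
  then show "eval e \<sigma> v \<and> \<delta> = Conv \<Longrightarrow> geval e \<sigma> Conv v \<delta>" by blast
qed

lemma bigstep_imp_gco: "bigstep c \<sigma> \<sigma>' \<Longrightarrow> gco c \<sigma> Conv \<sigma>' Conv"
  by (induction rule: bigstep.induct) (auto intro: gco.intros simp: geval_Conv_iff)

lemma gco_Conv_eq_bigstep:
  "bigstep c \<sigma> \<sigma>\<^sub>1 \<Longrightarrow> gco c \<sigma> Conv \<sigma>\<^sub>2 \<delta> \<Longrightarrow> \<sigma>\<^sub>2 = \<sigma>\<^sub>1 \<and> \<delta> = Conv"
proof (induction arbitrary: \<sigma>\<^sub>2 \<delta> rule: bigstep.induct)
  case (BAssign x \<sigma> e v)
  from BAssign.prems show ?case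
    by (cases rule: gco.cases) (auto simp: geval_Conv_iff dest: eval_deterministic[OF BAssign.hyps(2)])
next
  case (BSeq c1 \<sigma> \<sigma>' c2 \<sigma>'')
  from BSeq.prems show ?case
    by (cases rule: gco.cases) (auto dest!: BSeq.IH)
next
  case (BIfT e \<sigma> v c1 \<sigma>' c2)
  from BIfT.prems show ?case
    using BIfT.hyps(2) eval_deterministic[OF BIfT.hyps(1)]
    by (cases rule: gco.cases) (auto simp: geval_Conv_iff dest: BIfT.IH)
next
  case (BIfF e \<sigma> c2 \<sigma>' c1)
  from BIfF.prems show ?case
    using eval_deterministic[OF BIfF.hyps(1)]
    by (cases rule: gco.cases) (auto simp: geval_Conv_iff dest: BIfF.IH)
next
  case (BWhileT e \<sigma> v c \<sigma>' \<sigma>'')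
  from BWhileT.prems show ?case
    using BWhileT.hyps(2) eval_deterministic[OF BWhileT.hyps(1)]
    by (cases rule: gco.cases) (auto simp: geval_Conv_iff dest: BWhileT.IH)
next
  case (BWhileF e \<sigma> c)
  from BWhileF.prems show ?case
    using eval_deterministic[OF BWhileF.hyps(1)]
    by (cases rule: gco.cases) (auto simp: geval_Conv_iff)
qed (auto elim: gco.cases)

lemma diverges_imp_gco_Div: "diverges c \<sigma> \<Longrightarrow> gco c \<sigma> Conv \<sigma>' Div"
proof (coinduction arbitrary: c \<sigma>)
  case gco
  from gco show ?case
  proof (cases rule: diverges.cases)
    case (DSeq1 c1 c2) then show ?thesis by (auto intro: gco.GDivC)
  next
    case (DSeq2 c1 \<sigma>\<^sub>1 c2) then show ?thesis by (auto intro: bigstep_imp_gco)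
  next
    case (DIfT e v c1 c2) then show ?thesis by (auto simp: geval_Conv_iff)
  next
    case (DIfF e c2 c1) then show ?thesis by (auto simp: geval_Conv_iff)
  next
    case (DWhile1 e v c') then show ?thesis by (auto simp: geval_Conv_iff intro: gco.GDivC)
  next
    case (DWhile2 e v c' \<sigma>\<^sub>1) then show ?thesis by (auto simp: geval_Conv_iff intro: bigstep_imp_gco)
  qed
qed

lemma gco_Conv_without_bigstep_imp_diverges:
  assumes "gco c \<sigma> Conv \<sigma>' \<delta>" and "\<nexists>\<sigma>''. bigstep c \<sigma> \<sigma>''"
  shows "diverges c \<sigma>"
  using assms
proof (coinduction arbitrary: c \<sigma> \<sigma>' \<delta>)
  case (diverges c \<sigma> \<sigma>' \<delta>)
  note no_bigstep = diverges(2)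
  from diverges(1) show ?case
  proof (cases rule: gco.cases)
    case (GSeq c1 \<sigma>\<^sub>1 \<delta>\<^sub>1 c2)
    show ?thesis
    proof (cases "\<exists>\<sigma>\<^sub>1'. bigstep c1 \<sigma> \<sigma>\<^sub>1'")
      case True
      then obtain \<sigma>\<^sub>1' where c1: "bigstep c1 \<sigma> \<sigma>\<^sub>1'" ..
      with GSeq(2) have "\<sigma>\<^sub>1 = \<sigma>\<^sub>1'" "\<delta>\<^sub>1 = Conv" by (auto dest: gco_Conv_eq_bigstep)
      moreover have "\<nexists>\<sigma>''. bigstep c2 \<sigma>\<^sub>1' \<sigma>''"
        using c1 GSeq(1) no_bigstep by (auto intro: bigstep.BSeq)
      ultimately show ?thesis using GSeq c1 by (intro disjI2 disjI1) auto
    next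
      case False
      with GSeq show ?thesis by (intro disjI1) auto
    qed
  next
    case (GIfT v e \<delta>\<^sub>1 c1 c2)
    then have "\<nexists>\<sigma>''. bigstep c1 \<sigma> \<sigma>''"
      using no_bigstep by (auto simp: geval_Conv_iff intro: bigstep.BIfT)
    with GIfT show ?thesis by (intro disjI2 disjI1) (auto simp: geval_Conv_iff)
  next
    case (GIfF e \<delta>\<^sub>1 c2 c1)
    then have "\<nexists>\<sigma>''. bigstep c2 \<sigma> \<sigma>''"
      using no_bigstep by (auto simp: geval_Conv_iff intro: bigstep.BIfF)
    with GIfF show ?thesis by (intro disjI2 disjI1) (auto simp: geval_Conv_iff)
  next
    case (GWhileT e v \<delta>\<^sub>1 c' \<sigma>\<^sub>1 \<delta>\<^sub>1')
    show ?thesis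
    proof (cases "\<exists>\<sigma>\<^sub>1'. bigstep c' \<sigma> \<sigma>\<^sub>1'")
      case True
      then obtain \<sigma>\<^sub>1' where body: "bigstep c' \<sigma> \<sigma>\<^sub>1'" ..
      with GWhileT have "\<sigma>\<^sub>1 = \<sigma>\<^sub>1'" "\<delta>\<^sub>1' = Conv"
        by (auto simp: geval_Conv_iff dest: gco_Conv_eq_bigstep)
      moreover have "\<nexists>\<sigma>''. bigstep (While e c') \<sigma>\<^sub>1' \<sigma>''"
        using GWhileT body no_bigstep by (auto simp: geval_Conv_iff intro: bigstep.BWhileT)
      ultimately show ?thesis using GWhileT body by (intro disjI2) (auto simp: geval_Conv_iff)
    next
      case False
      with GWhileT show ?thesis by (intro disjI2 disjI1) (auto simp: geval_Conv_iff)
    qed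
  qed (use no_bigstep in \<open>auto simp: geval_Conv_iff intro: bigstep.intros\<close>)
    \<comment> \<open>every other rule from \<open>Conv\<close> describes a terminating run\<close>
qed

theorem theorem18:
  fixes c :: com and \<sigma> \<sigma>' :: store
  shows "diverges c \<sigma> \<longleftrightarrow> gco c \<sigma> Conv \<sigma>' Div"
proof
  show "diverges c \<sigma> \<Longrightarrow> gco c \<sigma> Conv \<sigma>' Div" by (rule diverges_imp_gco_Div)
next
  assume gco: "gco c \<sigma> Conv \<sigma>' Div"
  then have "\<nexists>\<sigma>''. bigstep c \<sigma> \<sigma>''" using gco_Conv_eq_bigstep by blast
  with gco show "diverges c \<sigma>" by (rule gco_Conv_without_bigstep_imp_diverges)
qed

end
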